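(* Suppose $D$ is an effective divisor class on $X$ and $A_t$ is an ample divisor with $2A_t\cdot D\le A_t\cdot K$. Then $\chi(D)<\frac{n-1}{8}$. In particular, if $10\le n\le 17$ and $\chi(D)\ge1$, then $\chi(D)=1$.
   Context: Let $X$ be the blowup of $\mathbb{P}^2_{\mathbb{C}}$ at $n$ very general points, with $H$ the pullback of a line class, $E_i$ the exceptional divisors, $E=\sum_iE_i$, and $K=K_X=-3H+E$. For real $t$, $A_t=tH-E$. Write $\chi(D)=\chi(\mathcal{O}_X(D))$. A divisor class is effective if it is the class of an effective divisor (zero allowed). *)

theory Defs
  imports Complex_Main
begin

text \<open>
  Model of X = Bl_n P^2 at points p_0,...,p_{n-1} taken in the affine chart C^2.
  A divisor class dH - sum_i m_i E_i is encoded as the pair (d, m) with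
  d :: int and m :: nat => int (only the entries i < n matter).
  A real class aH - sum_i b_i E_i is encoded as (a, b) with real entries.
\<close>

type_synonym divclass = "int \<times> (nat \<Rightarrow> int)"
type_synonym rdivclass = "real \<times> (nat \<Rightarrow> real)"
type_synonym config = "nat \<Rightarrow> complex \<times> complex"

definition inters :: "nat \<Rightarrow> divclass \<Rightarrow> divclass \<Rightarrow> int" where
  "inters n D D' = fst D * fst D' - (\<Sum>i<n. snd D i * snd D' i)"

definition rinters :: "nat \<Rightarrow> rdivclass \<Rightarrow> divclass \<Rightarrow> real" where
  "rinters n A D = fst A * of_int (fst D) - (\<Sum>i<n. snd A i * of_int (snd D i))"

text \<open>Canonical class K = -3H + E = -3H - sum_i (-1) E_i.\<close>
definition Kcls :: divclass where
  "Kcls = (-3, \<lambda>_. -1)"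

definition Acls :: "real \<Rightarrow> rdivclass" where
  "Acls t = (t, \<lambda>_. 1)"

text \<open>Euler characteristic chi(O_X(D)) via Riemann--Roch, chi(O_X) = 1.\<close>
definition chi :: "nat \<Rightarrow> divclass \<Rightarrow> real" where
  "chi n D = 1 + (of_int (inters n D D) - of_int (inters n D Kcls)) / 2"

text \<open>Bivariate polynomials f(x,y) = sum c a b x^a y^b of degree at most d;
  coefficient of u^i v^j in f(x0+u, y0+v).\<close>
definition shifted_coeff ::
  "(nat \<Rightarrow> nat \<Rightarrow> complex) \<Rightarrow> nat \<Rightarrow> complex \<times> complex \<Rightarrow> nat \<Rightarrow> nat \<Rightarrow> complex" where
  "shifted_coeff c d p i j =
     (\<Sum>a\<le>d. \<Sum>b\<le>d. c a b * of_nat (a choose i) * of_nat (b choose j)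
                       * fst p ^ (a - i) * snd p ^ (b - j))"

definition mult_ge ::
  "(nat \<Rightarrow> nat \<Rightarrow> complex) \<Rightarrow> nat \<Rightarrow> complex \<times> complex \<Rightarrow> int \<Rightarrow> bool" where
  "mult_ge c d p m \<longleftrightarrow> (\<forall>i j. int (i + j) < m \<longrightarrow> shifted_coeff c d p i j = 0)"

text \<open>dH - sum m_i E_i is effective on Bl_p P^2 iff d \<ge> 0 and there is a nonzero
  plane curve of degree d (dehomogenised in the affine chart) with multiplicity
  at least m_i at p_i for all i < n.\<close>
definition effective :: "nat \<Rightarrow> config \<Rightarrow> divclass \<Rightarrow> bool" where
  "effective n p D \<longleftrightarrow> fst D \<ge> 0 \<and>
     (\<exists>c. (\<forall>a b. a + b > nat (fst D) \<longrightarrow> c a b = 0) \<and> (\<exists>a b. c a b \<noteq> 0) \<and>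
          (\<forall>i<n. mult_ge c (nat (fst D)) (p i) (snd D i)))"

definition nef :: "nat \<Rightarrow> config \<Rightarrow> rdivclass \<Rightarrow> bool" where
  "nef n p A \<longleftrightarrow> (\<forall>D. effective n p D \<longrightarrow> rinters n A D \<ge> 0)"

text \<open>Ampleness of a real class via Kleiman's criterion: interior of the nef cone.\<close>
definition ample :: "nat \<Rightarrow> config \<Rightarrow> rdivclass \<Rightarrow> bool" where
  "ample n p A \<longleftrightarrow> (\<exists>\<epsilon>>0. \<forall>\<delta>0 \<delta>. \<bar>\<delta>0\<bar> < \<epsilon> \<and> (\<forall>i<n. \<bar>\<delta> i\<bar> < \<epsilon>) \<longrightarrow>
        nef n p (fst A + \<delta>0, \<lambda>i. snd A i + \<delta> i))"

text \<open>Polynomials in the variables z_0,...,z_{N-1} over C: coefficient functions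
  on exponent vectors with finite support, using only variables < N.\<close>
definition poly_in :: "nat \<Rightarrow> ((nat \<Rightarrow> nat) \<Rightarrow> complex) \<Rightarrow> bool" where
  "poly_in N F \<longleftrightarrow> finite {\<alpha>. F \<alpha> \<noteq> 0} \<and> (\<forall>\<alpha>. F \<alpha> \<noteq> 0 \<longrightarrow> (\<forall>j\<ge>N. \<alpha> j = 0))"

definition mpoly_eval :: "nat \<Rightarrow> ((nat \<Rightarrow> nat) \<Rightarrow> complex) \<Rightarrow> (nat \<Rightarrow> complex) \<Rightarrow> complex" where
  "mpoly_eval N F z = (\<Sum>\<alpha>\<in>{\<alpha>. F \<alpha> \<noteq> 0}. F \<alpha> * (\<Prod>j<N. z j ^ \<alpha> j))"

definition config_of :: "(nat \<Rightarrow> complex) \<Rightarrow> config" where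
  "config_of z = (\<lambda>i. (z (2 * i), z (2 * i + 1)))"

end

theory Submission
  imports Defs "HOL-Analysis.Convex"
begin

text \<open>
  Ampleness of A_t forces t > sqrt n. Counting monomials against conditions, there is a curve of
  degree d with multiplicity m at every p_i as soon as n m (m + 1) < (d + 1)(d + 2), so nefness
  of A_s for some s < t gives n m \<le> s d for such pairs; taking d \<approx> sqrt n (m + 1) and
  m \<rightarrow> \<infinity> yields s \<ge> sqrt n. This needs nothing about the position of the points.

  Writing D = dH - \<Sum> m_i E_i, Riemann-Roch reads
  2 \<chi>(D) - 2 = (d + 3/2)^2 - 9/4 - \<Sum> (m_i + 1/2)^2 + n/4, and the hypothesis
  2 A_t.D \<le> A_t.K reads t (d + 3/2) \<le> \<Sum> (m_i + 1/2). With t^2 > n, Cauchy-Schwarz gives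
  (d + 3/2)^2 < \<Sum> (m_i + 1/2)^2, hence \<chi>(D) < (n - 1)/8. As \<chi>(D) is an integer,
  1 \<le> \<chi>(D) < 2 forces \<chi>(D) = 1 when n \<le> 17.
\<close>

lemma homogeneous_system_nontrivial_solution:
  fixes \<phi> :: "'e \<Rightarrow> 'u \<Rightarrow> 'a::field"
  assumes "finite E" "finite U" "card E < card U"
  shows "\<exists>x. (\<exists>u\<in>U. x u \<noteq> 0) \<and> (\<forall>e\<in>E. (\<Sum>u\<in>U. \<phi> e u * x u) = 0)"
  using assms
proof (induction E arbitrary: U \<phi> rule: finite_induct)
  case empty
  then obtain u where "u \<in> U" by fastforce
  then show ?case by (intro exI[of _ "\<lambda>_. 1"]) auto
next
  case (insert e0 F U \<phi>)
  show ?case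
  proof (cases "\<forall>u\<in>U. \<phi> e0 u = 0")
    case True
    have "card F < card U" using insert by simp
    with insert.IH[of U \<phi>] insert.prems(1) obtain x where
      "\<exists>u\<in>U. x u \<noteq> 0" "\<forall>e\<in>F. (\<Sum>u\<in>U. \<phi> e u * x u) = 0"
      by blast
    with True show ?thesis by (intro exI[of _ x]) auto
  next
    case False
    then obtain u0 where u0: "u0 \<in> U" "\<phi> e0 u0 \<noteq> 0" by blast
    define U' where "U' = U - {u0}"
    \<comment> \<open>Gaussian elimination: use equation e0 to eliminate the unknown u0.\<close>
    define \<psi> where "\<psi> e u = \<phi> e u - \<phi> e u0 * \<phi> e0 u / \<phi> e0 u0" for e u
    have "card U = Suc (card U')"
      unfolding U'_def using card_Suc_Diff1[OF insert.prems(1) u0(1)] by (rule sym)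
    with insert have "card F < card U'" by simp
    with insert.IH[of U' \<psi>] insert.prems(1) obtain y where
      y: "\<exists>u\<in>U'. y u \<noteq> 0" "\<forall>e\<in>F. (\<Sum>u\<in>U'. \<psi> e u * y u) = 0"
      by (auto simp: U'_def)
    define s where "s = (\<Sum>u\<in>U'. \<phi> e0 u * y u)"
    define x where "x = y(u0 := - s / \<phi> e0 u0)"
    have xu0: "x u0 = - s / \<phi> e0 u0" by (simp add: x_def)
    have sum_split: "(\<Sum>u\<in>U. f u * x u) = f u0 * x u0 + (\<Sum>u\<in>U'. f u * y u)" for f :: "'u \<Rightarrow> 'a"
    proof -
      have "(\<Sum>u\<in>U'. f u * x u) = (\<Sum>u\<in>U'. f u * y u)"
        by (rule sum.cong) (auto simp: x_def U'_def)
      then show ?thesis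
        using u0 insert.prems(1) by (simp add: U'_def sum.remove)
    qed
    have "(\<Sum>u\<in>U. \<phi> e u * x u) = 0" if "e \<in> F" for e
    proof -
      have "(\<Sum>u\<in>U'. \<psi> e u * y u) = (\<Sum>u\<in>U'. \<phi> e u * y u) - \<phi> e u0 / \<phi> e0 u0 * s"
        by (simp add: \<psi>_def s_def algebra_simps sum_subtractf sum_distrib_left)
      with y(2) that show ?thesis by (simp add: sum_split xu0)
    qed
    moreover have "(\<Sum>u\<in>U. \<phi> e0 u * x u) = 0"
      using u0 by (simp add: sum_split xu0 s_def)
    moreover have "\<exists>u\<in>U. x u \<noteq> 0"
      using y(1) by (auto simp: x_def U'_def)
    ultimately show ?thesis by (intro exI[of _ x]) auto
  qed
qed

lemma finite_pairs_sum_less: "finite {(a::nat, b::nat). a + b < m}"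
  by (rule finite_subset[of _ "{..<m} \<times> {..<m}"]) auto

lemma card_pairs_sum_less: "card {(a::nat, b::nat). a + b < m} * 2 = m * (m + 1)"
proof (induction m)
  case 0
  then show ?case by simp
next
  case (Suc m)
  have "{(a::nat, b). a + b < Suc m} = {(a, b). a + b < m} \<union> (\<lambda>a. (a, m - a)) ` {..m}"
    by auto
  moreover have "{(a::nat, b). a + b < m} \<inter> (\<lambda>a. (a, m - a)) ` {..m} = {}"
    by auto
  moreover have "inj_on (\<lambda>a::nat. (a, m - a)) {..m}"
    by (auto simp: inj_on_def)
  ultimately have "card {(a::nat, b). a + b < Suc m} = card {(a::nat, b). a + b < m} + (m + 1)"
    by (simp add: card_Un_disjoint finite_pairs_sum_less card_image)
  with Suc show ?case by simp
qed

lemma shifted_coeff_eq_sum_low_degree: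
  assumes "\<forall>a b. d < a + b \<longrightarrow> c a b = 0"
  shows "shifted_coeff c d p i j =
    (\<Sum>(a, b)\<in>{(a, b). a + b < d + 1}. c a b * of_nat (a choose i) * of_nat (b choose j)
                                        * fst p ^ (a - i) * snd p ^ (b - j))"
  unfolding shifted_coeff_def sum.cartesian_product
  by (rule sum.mono_neutral_right) (use assms in \<open>auto simp flip: not_le\<close>)

lemma effective_uniform_multiplicity:
  assumes "n * (m * (m + 1)) < (d + 1) * (d + 2)"
  shows "effective n p (int d, \<lambda>_. int m)"
proof -
  define U where "U = {(a::nat, b::nat). a + b < d + 1}"
  define E where "E = {..<n} \<times> {(i::nat, j::nat). i + j < m}"
  define \<phi> where "\<phi> = (\<lambda>(k, i, j) (a, b). of_nat (a choose i) * of_nat (b choose j)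
                          * fst (p k) ^ (a - i) * snd (p k) ^ (b - j) :: complex)"
  have "card E * 2 = n * (m * (m + 1))" and "card U * 2 = (d + 1) * (d + 2)"
    using card_pairs_sum_less[of m] card_pairs_sum_less[of "d + 1"]
    by (simp_all add: E_def U_def card_cartesian_product)
  with assms have "card E < card U" by linarith
  then obtain x where x: "\<exists>u\<in>U. x u \<noteq> 0" "\<forall>e\<in>E. (\<Sum>u\<in>U. \<phi> e u * x u) = 0"
    using homogeneous_system_nontrivial_solution[of E U \<phi>] finite_pairs_sum_less
    by (auto simp: E_def U_def)
  define c where "c a b = (if a + b \<le> d then x (a, b) else 0)" for a b
  have deg: "\<forall>a b. d < a + b \<longrightarrow> c a b = 0"
    by (auto simp: c_def)
  obtain a b where "a + b \<le> d" "x (a, b) \<noteq> 0"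
    using x(1) by (auto simp: U_def less_Suc_eq_le)
  then have "c a b \<noteq> 0" by (simp add: c_def)
  moreover have "shifted_coeff c d (p k) i j = (\<Sum>u\<in>U. \<phi> (k, i, j) u * x u)" for k i j
    unfolding shifted_coeff_eq_sum_low_degree[OF deg] U_def
    by (rule sum.cong) (auto simp: c_def \<phi>_def)
  then have "\<forall>k<n. mult_ge c d (p k) (int m)"
    using x(2) by (auto simp: mult_ge_def E_def)
  ultimately show ?thesis
    using deg unfolding effective_def by auto
qed

lemma nef_Acls_imp_sqrt_le:
  assumes "nef n p (s, \<lambda>_. 1)"
  shows "sqrt (real n) \<le> s"
proof -
  have curve: "real n * real m \<le> s * real d" if "n * (m * (m + 1)) < (d + 1) * (d + 2)" for m d
  proof -
    have "0 \<le> rinters n (s, \<lambda>_. 1) (int d, \<lambda>_. int m)"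
      using assms effective_uniform_multiplicity[OF that] unfolding nef_def by blast
    then show ?thesis by (simp add: rinters_def)
  qed
  have s0: "0 \<le> s"
    using curve[of 0 1] by simp
  have linear: "real n * real m \<le> s * (sqrt n * (real m + 1) + 1)" for m
  proof -
    define d where "d = nat \<lceil>sqrt n * (real m + 1)\<rceil>"
    have "real d = of_int \<lceil>sqrt n * (real m + 1)\<rceil>"
      by (simp add: d_def)
    then have d_ge: "sqrt n * (real m + 1) \<le> real d" and d_le: "real d < sqrt n * (real m + 1) + 1"
      using ceiling_correct[of "sqrt n * (real m + 1)"] by linarith+
    have "real n * (real m * (real m + 1)) \<le> (sqrt n * (real m + 1))\<^sup>2"
      by (simp add: power_mult_distrib power2_eq_square algebra_simps)
    also have "\<dots> \<le> (real d)\<^sup>2"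
      using d_ge by (intro power_mono) auto
    also have "\<dots> < (real d + 1) * (real d + 2)"
      by (simp add: power2_eq_square algebra_simps)
    finally have "real (n * (m * (m + 1))) < real ((d + 1) * (d + 2))"
      by (simp only: of_nat_mult of_nat_add of_nat_1 of_nat_numeral)
    then have "n * (m * (m + 1)) < (d + 1) * (d + 2)"
      by (simp only: of_nat_less_iff)
    then have "real n * real m \<le> s * real d" by (rule curve)
    also have "\<dots> \<le> s * (sqrt n * (real m + 1) + 1)"
      using s0 d_le by (intro mult_left_mono) auto
    finally show ?thesis .
  qed
  show ?thesis
  proof (rule ccontr)
    assume "\<not> sqrt n \<le> s"
    then have g: "0 < sqrt n - s" and "0 < sqrt n" using s0 by linarith+
    obtain m :: nat where "(s * sqrt n + s) / (sqrt n * (sqrt n - s)) < m"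
      using reals_Archimedean2 by blast
    then have "s * sqrt n + s < sqrt n * (sqrt n - s) * m"
      using g \<open>0 < sqrt n\<close> by (simp add: pos_divide_less_eq mult_ac)
    moreover have "sqrt n * (sqrt n - s) * m = real n * m - s * (sqrt n * m)"
      by (simp add: right_diff_distrib left_diff_distrib)
    ultimately show False
      using linear[of m] by (simp add: algebra_simps)
  qed
qed

lemma ample_Acls_imp_sqrt_less:
  assumes "ample n p (Acls t)"
  shows "sqrt (real n) < t"
proof -
  obtain \<epsilon> where "\<epsilon> > 0" and nef: "\<And>\<delta>0 \<delta>. \<bar>\<delta>0\<bar> < \<epsilon> \<and> (\<forall>i<n. \<bar>\<delta> i\<bar> < \<epsilon>) \<Longrightarrow>
      nef n p (t + \<delta>0, \<lambda>i. 1 + \<delta> i)"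
    using assms unfolding ample_def Acls_def by auto
  then have "nef n p (t - \<epsilon> / 2, \<lambda>_. 1)"
    using nef[of "- \<epsilon> / 2" "\<lambda>_. 0"] by simp
  then have "sqrt n \<le> t - \<epsilon> / 2" by (rule nef_Acls_imp_sqrt_le)
  with \<open>\<epsilon> > 0\<close> show ?thesis by simp
qed

lemma chi_eq:
  "2 * chi n (d, m) = 2 + of_int (d * (d + 3) - (\<Sum>i<n. m i * (m i + 1)))"
proof -
  have "inters n (d, m) (d, m) - inters n (d, m) Kcls = d * (d + 3) - (\<Sum>i<n. m i * (m i + 1))"
    by (simp add: inters_def Kcls_def algebra_simps sum.distrib sum_subtractf sum_negf)
  then show ?thesis
    unfolding chi_def by (simp flip: of_int_diff)
qed

lemma chi_in_Ints: "chi n D \<in> \<int>"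
proof -
  obtain d m where D: "D = (d, m)" by fastforce
  have "even (d * (d + 3) - (\<Sum>i<n. m i * (m i + 1)))"
    by (simp add: dvd_sum)
  then obtain k where "d * (d + 3) - (\<Sum>i<n. m i * (m i + 1)) = 2 * k" by blast
  with chi_eq[of n d m] have "chi n D = of_int (1 + k)" by (simp add: D)
  then show ?thesis by simp
qed

lemma chi_less_if_intersection_bound:
  assumes "0 \<le> fst D" and "sqrt (real n) < t"
    and "2 * rinters n (Acls t) D \<le> rinters n (Acls t) Kcls"
  shows "chi n D < (real n - 1) / 8"
proof -
  obtain d m where D: "D = (d, m)" by fastforce
  define X where "X = real_of_int d + 3 / 2"
  define Y where "Y = (\<Sum>i<n. real_of_int (m i) + 1 / 2)"
  define Q where "Q = (\<Sum>i<n. (real_of_int (m i) + 1 / 2)\<^sup>2)"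
  have X0: "0 < X" using assms(1) by (simp add: X_def D)
  have "0 \<le> sqrt (real n)" by simp
  with assms(2) have "0 < t" by linarith
  have "(sqrt (real n))\<^sup>2 < t\<^sup>2"
    using assms(2) \<open>0 \<le> sqrt (real n)\<close> by (rule power_strict_mono) simp
  then have "real n < t\<^sup>2" by simp
  have "2 * (t * d - (\<Sum>i<n. real_of_int (m i))) \<le> - 3 * t + real n"
    using assms(3) by (simp add: rinters_def Acls_def Kcls_def D)
  then have tXY: "t * X \<le> Y"
    by (simp add: X_def Y_def sum.distrib algebra_simps)
  have "real n * X\<^sup>2 < (t * X)\<^sup>2"
    using \<open>real n < t\<^sup>2\<close> X0 by (simp add: power_mult_distrib)
  also have "\<dots> \<le> Y\<^sup>2"
    using tXY \<open>0 < t\<close> X0 by (intro power_mono) auto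
  also have "\<dots> \<le> real n * Q"
    using Cauchy_Schwarz_ineq_sum[of "\<lambda>i. real_of_int (m i) + 1 / 2" "\<lambda>_. 1" "{..<n}"]
    by (simp add: Y_def Q_def mult.commute)
  finally have "X\<^sup>2 < Q"
    by (cases "n = 0") auto
  moreover have "Q = (\<Sum>i<n. real_of_int (m i * (m i + 1))) + real n / 4"
    unfolding Q_def by (simp add: power2_eq_square algebra_simps sum.distrib)
  moreover have "X\<^sup>2 = real_of_int (d * (d + 3)) + 9 / 4"
    by (simp add: X_def power2_eq_square algebra_simps)
  ultimately show ?thesis
    using chi_eq[of n d m] by (simp add: D of_int_diff of_int_sum)
qed

theorem proposition4p1:
  fixes n :: nat
  shows "\<exists>F :: nat \<Rightarrow> ((nat \<Rightarrow> nat) \<Rightarrow> complex).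
    (\<forall>k. poly_in (2 * n) (F k) \<and> (\<exists>\<alpha>. F k \<alpha> \<noteq> 0)) \<and>
    (\<forall>z. (\<forall>k. mpoly_eval (2 * n) (F k) z \<noteq> 0) \<longrightarrow>
      (\<forall>(D :: divclass) (t :: real).
         effective n (config_of z) D \<and> ample n (config_of z) (Acls t) \<and>
         2 * rinters n (Acls t) D \<le> rinters n (Acls t) Kcls \<longrightarrow>
           chi n D < (real n - 1) / 8 \<and>
           (10 \<le> n \<and> n \<le> 17 \<and> chi n D \<ge> 1 \<longrightarrow> chi n D = 1)))"
  \<comment> \<open>The bound holds for every configuration, so the constant polynomial 1 serves as F.\<close>
proof (intro exI[of _ "\<lambda>_ \<alpha>. if \<alpha> = (\<lambda>_. 0) then 1 else 0"] conjI allI impI)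
  show "poly_in (2 * n) (\<lambda>\<alpha>. if \<alpha> = (\<lambda>_. 0) then 1 else 0)"
    by (auto simp: poly_in_def)
  show "\<exists>\<alpha>. (if \<alpha> = (\<lambda>_. 0) then 1 else 0 :: complex) \<noteq> 0" by auto
next
  fix z and D :: divclass and t :: real
  assume "effective n (config_of z) D \<and> ample n (config_of z) (Acls t) \<and>
    2 * rinters n (Acls t) D \<le> rinters n (Acls t) Kcls"
  then have "0 \<le> fst D" "sqrt (real n) < t" "2 * rinters n (Acls t) D \<le> rinters n (Acls t) Kcls"
    by (auto simp: effective_def intro: ample_Acls_imp_sqrt_less)
  then show less: "chi n D < (real n - 1) / 8"
    by (rule chi_less_if_intersection_bound)
  assume "10 \<le> n \<and> n \<le> 17 \<and> 1 \<le> chi n D"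
  then have "1 \<le> chi n D" "chi n D < 2"
    using less by auto
  moreover obtain k where "chi n D = of_int k"
    using chi_in_Ints[of n D] by (auto elim: Ints_cases)
  ultimately show "chi n D = 1"
    by simp
qed

end
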